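(* The DSRT$_{\mathsf{A}}$-definable transformations are closed under intersection and composition, but not closed under union.
   Context: A linear group is a triple $\mathbf{G}=(D,\leq,+)$ where $D$ is an infinite set, $\leq$ is a total order on $D$, and $(D,+)$ is a group with identity $0$. For finite label sets $\Sigma,\Gamma$, a $(\Sigma,\Gamma,\mathbf{G})$-streaming register transducer (SRT) is a tuple $\mathcal{S}=(Q,q_0,k,R_0,\Delta)$: $Q$ finite set of states, $q_0\in Q$, $k\in\mathbb{N}$ registers, initial values $R_0\in D^k$, and transitions $\Delta\subseteq Q\times\Sigma\times\{>,=,<\}^k\times\{\mathsf{old},\mathsf{new},\mathsf{add}\}^k\times\{1,\dots,k\}\times\Gamma\times Q$. A transition $(q,\sigma,l,m,u,\gamma,q')$ enables the step $(q,R)\xrightarrow[(\gamma,d')]{(\sigma,d)}(q',R')$ iff (1) for every $i$, $d>R[i]$, $d=R[i]$ or $d<R[i]$ according as $l[i]$ is $>$, $=$, $<$; (2) $R'[i]=R[i]$, $d$, or $R[i]+d$ according as $m[i]$ is $\mathsf{old}$, $\mathsf{new}$, $\mathsf{add}$; (3) $d'=R'[u]$. A run over $s\in(\Sigma\times D)^*$ of length $n$ generating $t\in(\Gamma\times D)^*$ is a sequence of $n$ enabled steps from $(q_0,R_0)$ reading $s[i]$ and emitting $t[i]$. $s\otimes t$ is the word with $i$-th letter $(s[i],t[i])$; $[\![\mathcal{S}]\!]=\{s\otimes t:\text{there is a run over }s\text{ generating }t\}$. An SRT is deterministic if any two distinct transitions $(q_1,\sigma_1,l_1,\dots)$, $(q_2,\sigma_2,l_2,\dots)$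 satisfy $q_1\neq q_2$ or $\sigma_1\neq\sigma_2$ or $l_1\neq l_2$; it is add-free if all update vectors lie in $\{\mathsf{old},\mathsf{new}\}^k$. A DSRT$_{\mathsf{A}}$ is a deterministic add-free SRT; a transformation is DSRT$_{\mathsf{A}}$-definable if it equals $[\![\mathcal{S}]\!]$ for some DSRT$_{\mathsf{A}}$ $\mathcal{S}$. Union and intersection are taken for transducers of the same signature $(\Sigma,\Gamma,\mathbf{G})$. Composition: for $\mathcal{T}_1$ over $(\Sigma\times D)\times(\Gamma\times D)$ and $\mathcal{T}_2$ over $(\Gamma\times D)\times(\Theta\times D)$, $\mathcal{T}_1\cdot\mathcal{T}_2$ is the set of $s_1\otimes s_2$ ($s_1\in(\Sigma\times D)^*$, $s_2\in(\Theta\times D)^*$) such that some $s_3\in(\Gamma\times D)^*$ has $s_1\otimes s_3\in\mathcal{T}_1$ and $s_3\otimes s_2\in\mathcal{T}_2$. *)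

theory Defs
  imports Main
begin

text \<open>States are natural numbers (a finite set Q),
registers are numbered 0..k-1 (the paper uses 1..k), register valuations are lists of
length k. The label sets Sigma, Gamma are finite types; the data domain D is a type
'd with a total order (linorder) and a group structure (group_add); the two are not
required to be compatible, exactly as for a linear group.\<close>

datatype cmp = CGt | CEq | CLt
datatype upd = UOld | UNew | UAdd

type_synonym ('a, 'b) srt_trans = "nat \<times> 'a \<times> cmp list \<times> upd list \<times> nat \<times> 'b \<times> nat"

record ('a, 'b, 'd) srt =
  states :: "nat set"
  init_state :: nat
  nregs :: nat
  init_regs :: "'d list"
  transitions :: "('a, 'b) srt_trans set"

definition srt_wf :: "('a, 'b, 'd) srt \<Rightarrow> bool" where
  "srt_wf S \<longleftrightarrow> finite (states S) \<and> init_state S \<in> states S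
     \<and> length (init_regs S) = nregs S
     \<and> (\<forall>(q, \<sigma>, l, m, u, \<gamma>, q') \<in> transitions S.
          q \<in> states S \<and> q' \<in> states S \<and> length l = nregs S \<and> length m = nregs S
          \<and> u < nregs S)"

fun cmp_ok :: "cmp \<Rightarrow> 'd::linorder \<Rightarrow> 'd \<Rightarrow> bool" where
  "cmp_ok CGt d r = (d > r)"
| "cmp_ok CEq d r = (d = r)"
| "cmp_ok CLt d r = (d < r)"

fun upd_val :: "upd \<Rightarrow> 'd::group_add \<Rightarrow> 'd \<Rightarrow> 'd" where
  "upd_val UOld d r = r"
| "upd_val UNew d r = d"
| "upd_val UAdd d r = r + d"

definition srt_step ::
  "('a, 'b, 'd::{linorder, group_add}) srt \<Rightarrow> nat \<times> 'd list \<Rightarrow> 'a \<times> 'd \<Rightarrow> 'b \<times> 'd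
     \<Rightarrow> nat \<times> 'd list \<Rightarrow> bool" where
  "srt_step S c x y c' \<longleftrightarrow>
     (\<exists>l m u. (fst c, fst x, l, m, u, fst y, fst c') \<in> transitions S
        \<and> length (snd c) = nregs S
        \<and> (\<forall>i < nregs S. cmp_ok (l ! i) (snd x) (snd c ! i))
        \<and> snd c' = map (\<lambda>i. upd_val (m ! i) (snd x) (snd c ! i)) [0..<nregs S]
        \<and> snd y = snd c' ! u)"

fun srt_run ::
  "('a, 'b, 'd::{linorder, group_add}) srt \<Rightarrow> nat \<times> 'd list \<Rightarrow> ('a \<times> 'd) list
     \<Rightarrow> ('b \<times> 'd) list \<Rightarrow> bool" where
  "srt_run S c [] [] = True"
| "srt_run S c (x # s) (y # t) = (\<exists>c'. srt_step S c x y c' \<and> srt_run S c' s t)"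
| "srt_run S c _ _ = False"

definition srt_sem ::
  "('a, 'b, 'd::{linorder, group_add}) srt \<Rightarrow> (('a \<times> 'd) \<times> ('b \<times> 'd)) list set" where
  "srt_sem S = {zip s t | s t. length s = length t
                   \<and> srt_run S (init_state S, init_regs S) s t}"

definition srt_deterministic :: "('a, 'b, 'd) srt \<Rightarrow> bool" where
  "srt_deterministic S \<longleftrightarrow>
     (\<forall>tr1 \<in> transitions S. \<forall>tr2 \<in> transitions S. tr1 \<noteq> tr2 \<longrightarrow>
        (case (tr1, tr2) of ((q1, \<sigma>1, l1, _), (q2, \<sigma>2, l2, _)) \<Rightarrow>
           q1 \<noteq> q2 \<or> \<sigma>1 \<noteq> \<sigma>2 \<or> l1 \<noteq> l2))"

definition srt_add_free :: "('a, 'b, 'd) srt \<Rightarrow> bool" where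
  "srt_add_free S \<longleftrightarrow>
     (\<forall>(q, \<sigma>, l, m, u, \<gamma>, q') \<in> transitions S. set m \<subseteq> {UOld, UNew})"

definition DSRTA_definable ::
  "(('a::finite \<times> 'd::{linorder, group_add}) \<times> ('b::finite \<times> 'd)) list set \<Rightarrow> bool" where
  "DSRTA_definable T \<longleftrightarrow>
     (\<exists>S :: ('a, 'b, 'd) srt. srt_wf S \<and> srt_deterministic S \<and> srt_add_free S
        \<and> T = srt_sem S)"

definition transd_compose ::
  "(('a \<times> 'd) \<times> ('b \<times> 'd)) list set \<Rightarrow> (('b \<times> 'd) \<times> ('c \<times> 'd)) list set
     \<Rightarrow> (('a \<times> 'd) \<times> ('c \<times> 'd)) list set" where
  "transd_compose T1 T2 =
     {zip s1 s2 | s1 s2. length s1 = length s2 \<and>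
        (\<exists>s3. length s3 = length s1 \<and> zip s1 s3 \<in> T1 \<and> zip s3 s2 \<in> T2)}"

end

theory Submission
  imports Defs "HOL-Library.Countable"
begin

text \<open>A DSRTA is deterministic, so the transformation it defines is functional; the
transducers that output the input value and that output the constant 0 show that a union need
not be.

Intersection and composition run the two DSRTAs side by side on the concatenation of their
registers. This needs two things an SRT cannot do directly: compare two registers (to check that
both outputs agree, or to evaluate the guards of the second transducer on an intermediate value
held in a register) and copy one register into another (when the second transducer stores that
value). Both constructions are therefore phrased for register machines that see the full order
type of the input and the registers and may copy registers. Such a machine is simulated by a
DSRTA with one spare register: machine registers are mapped to physical ones, so that copying
only changes the map and the input value goes to an unused physical register, while the order
type of the machine registers is kept in the finite control.\<close>

definition cmp_of :: "'d::linorder \<Rightarrow> 'd \<Rightarrow> cmp" where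
  "cmp_of d r = (if r < d then CGt else if d = r then CEq else CLt)"

lemma cmp_ok_iff_cmp_of: "cmp_ok c d r \<longleftrightarrow> c = cmp_of d r"
  by (cases c) (auto simp: cmp_of_def)

lemma cmp_of_eq_CEq_iff [simp]: "cmp_of d r = CEq \<longleftrightarrow> d = r"
  by (auto simp: cmp_of_def)

lemma cmp_of_self [simp]: "cmp_of d d = CEq"
  by simp

fun cmp_flip :: "cmp \<Rightarrow> cmp" where
  "cmp_flip CGt = CLt" | "cmp_flip CEq = CEq" | "cmp_flip CLt = CGt"

lemma cmp_flip_cmp_of [simp]: "cmp_flip (cmp_of d r) = cmp_of r d"
  by (auto simp: cmp_of_def)

definition order_type :: "'d::linorder list \<Rightarrow> cmp list list" where
  "order_type xs = map (\<lambda>a. map (cmp_of a) xs) xs"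

lemma order_type_nth [simp]:
  "i < length xs \<Longrightarrow> j < length xs \<Longrightarrow> order_type xs ! i ! j = cmp_of (xs ! i) (xs ! j)"
  by (simp add: order_type_def)

lemma order_type_map_nth:
  assumes "set ns \<subseteq> {..<length xs}"
  shows "order_type (map ((!) xs) ns) = map (\<lambda>i. map (\<lambda>j. order_type xs ! i ! j) ns) ns"
  using assms by (auto simp: order_type_def subset_iff)

definition cons_order_type :: "cmp list \<Rightarrow> cmp list list \<Rightarrow> cmp list list" where
  "cons_order_type g T = (CEq # g) # map2 (\<lambda>c row. cmp_flip c # row) g T"

lemma cons_order_type_eq:
  "cons_order_type (map (cmp_of d) xs) (order_type xs) = order_type (d # xs)"
  by (simp add: cons_order_type_def order_type_def map2_map_map)

fun step_run :: "('c \<Rightarrow> 'x \<Rightarrow> 'y \<Rightarrow> 'c \<Rightarrow> bool) \<Rightarrow> 'c \<Rightarrow> 'x list \<Rightarrow> 'y list \<Rightarrow> bool" where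
  "step_run step c [] [] = True"
| "step_run step c (x # s) (y # t) = (\<exists>c'. step c x y c' \<and> step_run step c' s t)"
| "step_run step c _ _ = False"

lemma step_run_Nil_iff [simp]: "step_run step c [] t \<longleftrightarrow> t = []"
  by (cases t) auto

lemma step_run_Cons_iff:
  "step_run step c (x # s) t \<longleftrightarrow> (\<exists>y t' c'. t = y # t' \<and> step c x y c' \<and> step_run step c' s t')"
  by (cases t) auto

lemma step_run_length: "step_run step c s t \<Longrightarrow> length s = length t"
  by (induction step c s t rule: step_run.induct) auto

lemma step_run_functional:
  assumes "\<And>c x y1 y2 c1 c2. step c x y1 c1 \<Longrightarrow> step c x y2 c2 \<Longrightarrow> y1 = y2 \<and> c1 = c2"
  shows "step_run step c s t1 \<Longrightarrow> step_run step c s t2 \<Longrightarrow> t1 = t2"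
proof (induction s arbitrary: c t1 t2)
  case (Cons x s)
  obtain y1 t1' c1 y2 t2' c2 where
    "t1 = y1 # t1'" "step c x y1 c1" "step_run step c1 s t1'" and
    "t2 = y2 # t2'" "step c x y2 c2" "step_run step c2 s t2'"
    using Cons.prems by (auto simp: step_run_Cons_iff)
  then show ?case
    using assms Cons.IH by blast
qed simp

lemma step_run_bisim:
  assumes fwd: "\<And>c C x y c'. rel c C \<Longrightarrow> step1 c x y c' \<Longrightarrow> \<exists>C'. step2 C x y C' \<and> rel c' C'"
    and bwd: "\<And>c C x y C'. rel c C \<Longrightarrow> step2 C x y C' \<Longrightarrow> \<exists>c'. step1 c x y c' \<and> rel c' C'"
  shows "rel c C \<Longrightarrow> step_run step1 c s t \<longleftrightarrow> step_run step2 C s t"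
proof (induction s arbitrary: c C t)
  case (Cons x s)
  show ?case
  proof
    assume "step_run step1 c (x # s) t"
    then obtain y t' c' where "t = y # t'" "step1 c x y c'" "step_run step1 c' s t'"
      by (auto simp: step_run_Cons_iff)
    with fwd Cons show "step_run step2 C (x # s) t"
      by (fastforce simp: step_run_Cons_iff)
  next
    assume "step_run step2 C (x # s) t"
    then obtain y t' C' where "t = y # t'" "step2 C x y C'" "step_run step2 C' s t'"
      by (auto simp: step_run_Cons_iff)
    with bwd Cons show "step_run step1 c (x # s) t"
      by (fastforce simp: step_run_Cons_iff)
  qed
qed simp

definition step_prod ::
  "('c1 \<Rightarrow> 'x \<Rightarrow> 'y \<Rightarrow> 'c1 \<Rightarrow> bool) \<Rightarrow> ('c2 \<Rightarrow> 'x \<Rightarrow> 'y \<Rightarrow> 'c2 \<Rightarrow> bool)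
     \<Rightarrow> 'c1 \<times> 'c2 \<Rightarrow> 'x \<Rightarrow> 'y \<Rightarrow> 'c1 \<times> 'c2 \<Rightarrow> bool" where
  "step_prod step1 step2 c x y c' \<longleftrightarrow> step1 (fst c) x y (fst c') \<and> step2 (snd c) x y (snd c')"

lemma step_run_prod:
  "step_run (step_prod step1 step2) (c1, c2) s t \<longleftrightarrow> step_run step1 c1 s t \<and> step_run step2 c2 s t"
proof (induction s arbitrary: c1 c2 t)
  case (Cons x s)
  then show ?case
    by (auto simp: step_run_Cons_iff step_prod_def)
qed simp

definition step_cascade ::
  "('c1 \<Rightarrow> 'x \<Rightarrow> 'z \<Rightarrow> 'c1 \<Rightarrow> bool) \<Rightarrow> ('c2 \<Rightarrow> 'z \<Rightarrow> 'y \<Rightarrow> 'c2 \<Rightarrow> bool)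
     \<Rightarrow> 'c1 \<times> 'c2 \<Rightarrow> 'x \<Rightarrow> 'y \<Rightarrow> 'c1 \<times> 'c2 \<Rightarrow> bool" where
  "step_cascade step1 step2 c x y c' \<longleftrightarrow>
     (\<exists>z. step1 (fst c) x z (fst c') \<and> step2 (snd c) z y (snd c'))"

lemma step_run_cascade:
  "step_run (step_cascade step1 step2) (c1, c2) s t \<longleftrightarrow>
     (\<exists>u. step_run step1 c1 s u \<and> step_run step2 c2 u t)"
proof (induction s arbitrary: c1 c2 t)
  case (Cons x s)
  show ?case
  proof
    assume "step_run (step_cascade step1 step2) (c1, c2) (x # s) t"
    then obtain y t' z c1' c2' u where "t = y # t'" "step1 c1 x z c1'" "step2 c2 z y c2'"
      "step_run step1 c1' s u" "step_run step2 c2' u t'"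
      by (auto simp: step_run_Cons_iff step_cascade_def Cons.IH)
    then show "\<exists>u. step_run step1 c1 (x # s) u \<and> step_run step2 c2 u t"
      by (intro exI[of _ "z # u"]) auto
  next
    assume "\<exists>u. step_run step1 c1 (x # s) u \<and> step_run step2 c2 u t"
    then obtain z u y t' c1' c2' where "t = y # t'" "step1 c1 x z c1'" "step2 c2 z y c2'"
      "step_run step1 c1' s u" "step_run step2 c2' u t'"
      by (auto simp: step_run_Cons_iff)
    then show "step_run (step_cascade step1 step2) (c1, c2) (x # s) t"
      by (auto simp: step_cascade_def Cons.IH)
  qed
qed simp

definition zip_set :: "('a list \<Rightarrow> 'b list \<Rightarrow> bool) \<Rightarrow> ('a \<times> 'b) list set" where
  "zip_set P = {zip s t | s t. length s = length t \<and> P s t}"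

lemma zip_eq_zip_iff:
  "length s = length t \<Longrightarrow> length s' = length t' \<Longrightarrow> zip s t = zip s' t' \<longleftrightarrow> s = s' \<and> t = t'"
  by (metis map_fst_zip map_snd_zip)

lemma zip_in_zip_set_iff [simp]:
  "length s = length t \<Longrightarrow> zip s t \<in> zip_set P \<longleftrightarrow> P s t"
  unfolding zip_set_def by (auto simp: zip_eq_zip_iff)

lemma zip_set_Int: "zip_set P \<inter> zip_set Q = zip_set (\<lambda>s t. P s t \<and> Q s t)"
  by (auto simp: zip_set_def zip_eq_zip_iff) blast

lemma transd_compose_zip_set:
  "transd_compose (zip_set P) (zip_set Q) = zip_set (\<lambda>s t. \<exists>u. length u = length s \<and> P s u \<and> Q u t)"
proof (intro set_eqI iffI)
  fix x
  assume "x \<in> transd_compose (zip_set P) (zip_set Q)"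
  then obtain s t u where "x = zip s t" "length s = length t" "length u = length s"
    "zip s u \<in> zip_set P" "zip u t \<in> zip_set Q"
    unfolding transd_compose_def by blast
  then show "x \<in> zip_set (\<lambda>s t. \<exists>u. length u = length s \<and> P s u \<and> Q u t)"
    by auto
next
  fix x
  assume "x \<in> zip_set (\<lambda>s t. \<exists>u. length u = length s \<and> P s u \<and> Q u t)"
  then obtain s t u where "x = zip s t" "length s = length t" "length u = length s"
    "P s u" "Q u t"
    unfolding zip_set_def by blast
  moreover from this have "zip s u \<in> zip_set P" "zip u t \<in> zip_set Q"
    by simp_all
  ultimately show "x \<in> transd_compose (zip_set P) (zip_set Q)"
    unfolding transd_compose_def by blast
qed

lemma srt_sem_eq_zip_set:
  "srt_sem S = zip_set (step_run (srt_step S) (init_state S, init_regs S))"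
proof -
  have "srt_run S c s t = step_run (srt_step S) c s t" for c s t
    by (induction S c s t rule: srt_run.induct) auto
  then show ?thesis
    by (simp add: srt_sem_def zip_set_def)
qed

lemma srt_step_length: "srt_step S c x y c' \<Longrightarrow> length (snd c') = nregs S"
  by (auto simp: srt_step_def)

lemma srt_transitionD:
  assumes "srt_wf S" "srt_add_free S" "(q, \<sigma>, l, m, u, \<gamma>, q') \<in> transitions S"
  shows "q' \<in> states S" "length l = nregs S" "length m = nregs S" "u < nregs S"
    "set m \<subseteq> {UOld, UNew}"
  using assms by (auto simp: srt_wf_def srt_add_free_def)

definition regs_update :: "upd list \<Rightarrow> 'd::group_add \<Rightarrow> 'd list \<Rightarrow> 'd list" where
  "regs_update m d R = map (\<lambda>i. upd_val (m ! i) d (R ! i)) [0..<length R]"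

lemma srt_step_iff:
  assumes "srt_wf S" "length R = nregs S"
  shows "srt_step S (q, R) (\<sigma>, d) (\<gamma>, e) (q', R') \<longleftrightarrow>
    (\<exists>m u. (q, \<sigma>, map (cmp_of d) R, m, u, \<gamma>, q') \<in> transitions S
       \<and> R' = regs_update m d R \<and> e = R' ! u)"
proof -
  have guard: "(\<forall>i < nregs S. cmp_ok (l ! i) d (R ! i)) \<longleftrightarrow> l = map (cmp_of d) R"
    if "(q, \<sigma>, l, m, u, \<gamma>, q') \<in> transitions S" for l m u
    using that assms by (auto simp: srt_wf_def cmp_ok_iff_cmp_of list_eq_iff_nth_eq)
  have upd: "map (\<lambda>i. upd_val (m ! i) d (R ! i)) [0..<nregs S] = regs_update m d R" for m
    using assms(2) by (simp add: regs_update_def)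
  show ?thesis
  proof
    assume "srt_step S (q, R) (\<sigma>, d) (\<gamma>, e) (q', R')"
    then obtain l m u where "(q, \<sigma>, l, m, u, \<gamma>, q') \<in> transitions S"
      "\<forall>i < nregs S. cmp_ok (l ! i) d (R ! i)" "R' = regs_update m d R" "e = R' ! u"
      unfolding srt_step_def by (auto simp: upd)
    with guard show "\<exists>m u. (q, \<sigma>, map (cmp_of d) R, m, u, \<gamma>, q') \<in> transitions S
       \<and> R' = regs_update m d R \<and> e = R' ! u"
      by blast
  next
    assume "\<exists>m u. (q, \<sigma>, map (cmp_of d) R, m, u, \<gamma>, q') \<in> transitions S
       \<and> R' = regs_update m d R \<and> e = R' ! u"
    then obtain m u where tr: "(q, \<sigma>, map (cmp_of d) R, m, u, \<gamma>, q') \<in> transitions S"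
      and "R' = regs_update m d R" "e = R' ! u"
      by blast
    with guard[OF tr] assms(2) show "srt_step S (q, R) (\<sigma>, d) (\<gamma>, e) (q', R')"
      unfolding srt_step_def
      by (intro exI[of _ "map (cmp_of d) R"] exI[of _ m] exI[of _ u]) (simp add: upd)
  qed
qed

lemma srt_deterministicD:
  assumes "srt_deterministic S" "(q, \<sigma>, l, r) \<in> transitions S" "(q, \<sigma>, l, r') \<in> transitions S"
  shows "r = r'"
  using assms unfolding srt_deterministic_def by fastforce

lemma srt_step_functional:
  assumes "srt_wf S" "srt_deterministic S" "srt_step S c x y1 c1" "srt_step S c x y2 c2"
  shows "y1 = y2 \<and> c1 = c2"
proof -
  obtain q R \<sigma> d where c: "c = (q, R)" and x: "x = (\<sigma>, d)" by fastforce
  have "length R = nregs S"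
    using assms(3) c by (auto simp: srt_step_def)
  then show ?thesis
    using assms srt_deterministicD[OF assms(2)] unfolding c x
    by (cases y1; cases y2; cases c1; cases c2) (simp add: srt_step_iff, blast)
qed

lemma DSRTA_definable_functional:
  assumes "DSRTA_definable T" "zip s t1 \<in> T" "zip s t2 \<in> T"
    "length s = length t1" "length s = length t2"
  shows "t1 = t2"
proof -
  obtain S where S: "srt_wf S" "srt_deterministic S" "T = srt_sem S"
    using assms(1) unfolding DSRTA_definable_def by blast
  with assms(2-5) have "step_run (srt_step S) (init_state S, init_regs S) s t1"
    "step_run (srt_step S) (init_state S, init_regs S) s t2"
    by (simp_all add: srt_sem_eq_zip_set)
  then show ?thesis
    using step_run_functional[of "srt_step S"] srt_step_functional[OF S(1,2)] by metis
qed

section \<open>Non-closure under union\<close>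

definition one_reg_srt :: "upd \<Rightarrow> 'a \<Rightarrow> 'b \<Rightarrow> ('a, 'b, 'd::{linorder, group_add}) srt" where
  "one_reg_srt m a b = \<lparr>states = {0}, init_state = 0, nregs = 1, init_regs = [0],
     transitions = {(0, a, [c], [m], 0, b, 0) | c. True}\<rparr>"

lemma DSRTA_definable_one_reg_srt:
  "m \<in> {UOld, UNew} \<Longrightarrow> DSRTA_definable (srt_sem (one_reg_srt m a b))"
  unfolding DSRTA_definable_def
  by (rule exI[of _ "one_reg_srt m a b"])
     (auto simp: one_reg_srt_def srt_wf_def srt_deterministic_def srt_add_free_def)

lemma one_reg_srt_sem:
  "zip [(a, d)] [(b, upd_val m d 0)] \<in> srt_sem (one_reg_srt m a b)"
proof -
  have "srt_wf (one_reg_srt m a b)"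
    by (auto simp: one_reg_srt_def srt_wf_def)
  then have "srt_step (one_reg_srt m a b) (0, [0]) (a, d) (b, upd_val m d 0) (0, [upd_val m d 0])"
    by (subst srt_step_iff) (auto simp: one_reg_srt_def regs_update_def)
  then show ?thesis
    unfolding srt_sem_eq_zip_set by (subst zip_in_zip_set_iff) (auto simp: one_reg_srt_def)
qed

lemma DSRTA_definable_not_closed_under_union:
  assumes "infinite (UNIV :: 'd::{linorder, group_add} set)"
  shows "\<exists>T1 T2 :: (('a::finite \<times> 'd) \<times> ('b::finite \<times> 'd)) list set.
           DSRTA_definable T1 \<and> DSRTA_definable T2 \<and> \<not> DSRTA_definable (T1 \<union> T2)"
proof -
  obtain d :: 'd where "d \<noteq> 0"
    using assms by (metis finite.emptyI finite_insert ex_new_if_finite insertI1)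
  fix a :: 'a and b :: 'b
  let ?T1 = "srt_sem (one_reg_srt UNew a b) :: (('a \<times> 'd) \<times> ('b \<times> 'd)) list set"
  let ?T2 = "srt_sem (one_reg_srt UOld a b) :: (('a \<times> 'd) \<times> ('b \<times> 'd)) list set"
  have "\<not> DSRTA_definable (?T1 \<union> ?T2)"
    using one_reg_srt_sem[of a d b UNew] one_reg_srt_sem[of a d b UOld] \<open>d \<noteq> 0\<close>
      DSRTA_definable_functional[of "?T1 \<union> ?T2" "[(a, d)]" "[(b, d)]" "[(b, 0)]"]
    by auto
  then show ?thesis
    using DSRTA_definable_one_reg_srt by blast
qed

section \<open>Register machines with copying\<close>

text \<open>The transition function reads the order type of \<open>d # R\<close> for the input value \<open>d\<close> and the
registers \<open>R\<close>; the new registers and the output value are given as indices into \<open>d # R\<close>.\<close>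

record ('q, 'a, 'b, 'd) crm =
  crm_states :: "'q set"
  crm_init :: 'q
  crm_nregs :: nat
  crm_init_regs :: "'d list"
  crm_delta :: "'q \<Rightarrow> 'a \<Rightarrow> cmp list list \<Rightarrow> ('q \<times> 'b \<times> nat list \<times> nat) option"

fun crm_step ::
  "('q, 'a, 'b, 'd::linorder) crm \<Rightarrow> 'q \<times> 'd list \<Rightarrow> 'a \<times> 'd \<Rightarrow> 'b \<times> 'd \<Rightarrow> 'q \<times> 'd list \<Rightarrow> bool"
where
  "crm_step M (q, R) (\<sigma>, d) (\<gamma>, e) (q', R') \<longleftrightarrow>
     length R = crm_nregs M \<and>
     (\<exists>f out. crm_delta M q \<sigma> (order_type (d # R)) = Some (q', \<gamma>, f, out)
        \<and> R' = map ((!) (d # R)) f \<and> e = (d # R) ! out)"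

definition crm_wf :: "('q, 'a, 'b, 'd) crm \<Rightarrow> bool" where
  "crm_wf M \<longleftrightarrow> finite (crm_states M) \<and> crm_init M \<in> crm_states M
     \<and> length (crm_init_regs M) = crm_nregs M
     \<and> (\<forall>q \<in> crm_states M. \<forall>\<sigma> T q' \<gamma> f out.
          crm_delta M q \<sigma> T = Some (q', \<gamma>, f, out) \<longrightarrow>
          q' \<in> crm_states M \<and> length f = crm_nregs M \<and> set f \<subseteq> {..crm_nregs M}
          \<and> out \<le> crm_nregs M)"

definition crm_sem :: "('q, 'a, 'b, 'd::linorder) crm \<Rightarrow> (('a \<times> 'd) \<times> ('b \<times> 'd)) list set" where
  "crm_sem M = zip_set (step_run (crm_step M) (crm_init M, crm_init_regs M))"

definition free_slot :: "nat list \<Rightarrow> nat" where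
  "free_slot ns = (LEAST p. p \<notin> set ns)"

lemma free_slot_notin_le_length: "free_slot ns \<notin> set ns" "free_slot ns \<le> length ns"
proof -
  have "\<not> {0..length ns} \<subseteq> set ns"
    using card_mono[of "set ns" "{0..length ns}"] card_length[of ns] by auto
  then obtain p where p: "p \<le> length ns" "p \<notin> set ns"
    by (meson atLeastAtMost_iff le0 subsetI)
  show "free_slot ns \<notin> set ns"
    unfolding free_slot_def using p(2) by (rule LeastI)
  show "free_slot ns \<le> length ns"
    unfolding free_slot_def using p by (metis Least_le order_trans)
qed

lemma map_nth_list_update_fresh:
  "p \<notin> set ns \<Longrightarrow> p < length xs \<Longrightarrow> map ((!) (xs[p := d])) (p # ns) = d # map ((!) xs) ns"
  by (auto simp: nth_list_update)

instance cmp :: finite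
proof
  have "UNIV = {CGt, CEq, CLt}" by (auto intro: cmp.exhaust)
  then show "finite (UNIV :: cmp set)" by (metis finite.emptyI finite_insert)
qed

text \<open>A state of the simulating SRT consists of the machine state, the physical register holding
each machine register, and the order type of the machine registers.\<close>

type_synonym 'q alias_state = "'q \<times> nat list \<times> cmp list list"

definition srt_of_crm_states :: "('q, 'a, 'b, 'd) crm \<Rightarrow> 'q alias_state set" where
  "srt_of_crm_states M = {(q, \<pi>, T). q \<in> crm_states M
     \<and> length \<pi> = crm_nregs M \<and> set \<pi> \<subseteq> {..crm_nregs M}
     \<and> length T = crm_nregs M \<and> (\<forall>row \<in> set T. length row = crm_nregs M)}"

definition srt_of_crm_next ::
  "('q, 'a, 'b, 'd) crm \<Rightarrow> 'q alias_state \<Rightarrow> 'a \<Rightarrow> cmp list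
     \<Rightarrow> (upd list \<times> nat \<times> 'b \<times> 'q alias_state) option" where
  "srt_of_crm_next M st \<sigma> l = (case st of (q, \<pi>, T) \<Rightarrow>
     let p = free_slot \<pi>; T0 = cons_order_type (map ((!) l) \<pi>) T in
     map_option (\<lambda>(q', \<gamma>, f, out).
         (map (\<lambda>i. if i = p then UNew else UOld) [0..<Suc (crm_nregs M)], (p # \<pi>) ! out, \<gamma>,
          (q', map ((!) (p # \<pi>)) f, map (\<lambda>i. map (\<lambda>j. T0 ! i ! j) f) f)))
       (crm_delta M q \<sigma> T0))"

definition srt_of_crm ::
  "('q::countable, 'a, 'b, 'd::{linorder, group_add}) crm \<Rightarrow> ('a, 'b, 'd) srt" where
  "srt_of_crm M = \<lparr>states = to_nat ` srt_of_crm_states M,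
     init_state = to_nat (crm_init M, [0..<crm_nregs M], order_type (crm_init_regs M)),
     nregs = Suc (crm_nregs M), init_regs = crm_init_regs M @ [0],
     transitions = {(to_nat st, \<sigma>, l, m, u, \<gamma>, to_nat st') | st \<sigma> l m u \<gamma> st'.
        st \<in> srt_of_crm_states M \<and> length l = Suc (crm_nregs M)
        \<and> srt_of_crm_next M st \<sigma> l = Some (m, u, \<gamma>, st')}\<rparr>"

lemma srt_of_crm_transition_iff:
  assumes "st \<in> srt_of_crm_states M"
  shows "(to_nat st, \<sigma>, l, m, u, \<gamma>, N) \<in> transitions (srt_of_crm M) \<longleftrightarrow>
    length l = Suc (crm_nregs M) \<and> (\<exists>st'. srt_of_crm_next M st \<sigma> l = Some (m, u, \<gamma>, st') \<and> N = to_nat st')"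
  using assms by (cases st) (auto simp: srt_of_crm_def)

lemma srt_of_crm_next_wf:
  assumes "crm_wf M" "st \<in> srt_of_crm_states M" "srt_of_crm_next M st \<sigma> l = Some (m, u, \<gamma>, st')"
  shows "st' \<in> srt_of_crm_states M" "length m = Suc (crm_nregs M)" "u < Suc (crm_nregs M)"
    "set m \<subseteq> {UOld, UNew}"
proof -
  let ?n = "crm_nregs M"
  obtain q \<pi> T where st: "st = (q, \<pi>, T)"
    by (cases st)
  define p where "p = free_slot \<pi>"
  define T0 where "T0 = cons_order_type (map ((!) l) \<pi>) T"
  obtain q' f out where
    delta: "crm_delta M q \<sigma> T0 = Some (q', \<gamma>, f, out)" and
    m: "m = map (\<lambda>i. if i = p then UNew else UOld) [0..<Suc ?n]" and
    u: "u = (p # \<pi>) ! out" and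
    st': "st' = (q', map ((!) (p # \<pi>)) f, map (\<lambda>i. map (\<lambda>j. T0 ! i ! j) f) f)"
    using assms(3) unfolding srt_of_crm_next_def st p_def T0_def Let_def by auto
  have \<pi>: "length \<pi> = ?n" "set \<pi> \<subseteq> {..?n}" and "q \<in> crm_states M"
    using assms(2) st by (auto simp: srt_of_crm_states_def)
  then have f: "q' \<in> crm_states M" "length f = ?n" "set f \<subseteq> {..?n}" "out \<le> ?n"
    using assms(1) delta unfolding crm_wf_def by blast+
  have "p \<le> ?n"
    using free_slot_notin_le_length(2)[of \<pi>] \<pi> p_def by simp
  then have slots: "(p # \<pi>) ! s \<le> ?n" if "s \<le> ?n" for s
    using that \<pi> by (cases s) (auto simp: subset_iff)
  show "st' \<in> srt_of_crm_states M"
    using f slots by (auto simp: st' srt_of_crm_states_def subset_iff)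
  show "length m = Suc ?n" "set m \<subseteq> {UOld, UNew}"
    by (auto simp: m)
  show "u < Suc ?n"
    using slots[OF f(4)] u by simp
qed

lemma finite_srt_of_crm_states:
  assumes "finite (crm_states M)"
  shows "finite (srt_of_crm_states M)"
proof -
  let ?n = "crm_nregs M"
  let ?rows = "{row :: cmp list. set row \<subseteq> UNIV \<and> length row = ?n}"
  have "srt_of_crm_states M \<subseteq> crm_states M \<times> {\<pi>. set \<pi> \<subseteq> {..?n} \<and> length \<pi> = ?n}
      \<times> {T. set T \<subseteq> ?rows \<and> length T = ?n}"
    by (auto simp: srt_of_crm_states_def)
  moreover have "finite {\<pi>. set \<pi> \<subseteq> {..?n} \<and> length \<pi> = ?n}"
    by (rule finite_lists_length_eq) simp
  moreover have "finite ?rows"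
    by (rule finite_lists_length_eq) simp
  then have "finite {T. set T \<subseteq> ?rows \<and> length T = ?n}"
    by (rule finite_lists_length_eq)
  ultimately show ?thesis
    using assms by (meson finite_SigmaI finite_subset)
qed

lemma srt_wf_srt_of_crm:
  assumes "crm_wf M"
  shows "srt_wf (srt_of_crm M)"
proof -
  have "finite (crm_states M)" "crm_init M \<in> crm_states M"
    "length (crm_init_regs M) = crm_nregs M"
    using assms by (auto simp: crm_wf_def)
  moreover have "(crm_init M, [0..<crm_nregs M], order_type (crm_init_regs M)) \<in> srt_of_crm_states M"
    using calculation by (auto simp: srt_of_crm_states_def order_type_def)
  ultimately have "finite (states (srt_of_crm M))" "init_state (srt_of_crm M) \<in> states (srt_of_crm M)"
    "length (init_regs (srt_of_crm M)) = nregs (srt_of_crm M)"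
    by (simp_all add: srt_of_crm_def finite_srt_of_crm_states)
  moreover have "q \<in> states (srt_of_crm M) \<and> q' \<in> states (srt_of_crm M)
      \<and> length l = nregs (srt_of_crm M) \<and> length m = nregs (srt_of_crm M) \<and> u < nregs (srt_of_crm M)"
    if "(q, \<sigma>, l, m, u, \<gamma>, q') \<in> transitions (srt_of_crm M)" for q \<sigma> l m u \<gamma> q'
    using that srt_of_crm_next_wf[OF assms] by (auto simp: srt_of_crm_def)
  ultimately show ?thesis
    unfolding srt_wf_def by blast
qed

lemma srt_deterministic_srt_of_crm: "srt_deterministic (srt_of_crm M)"
  by (auto simp: srt_deterministic_def srt_of_crm_def)

lemma srt_add_free_srt_of_crm: "crm_wf M \<Longrightarrow> srt_add_free (srt_of_crm M)"
  by (auto simp: srt_add_free_def srt_of_crm_def dest: srt_of_crm_next_wf(4))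

fun srt_of_crm_rel ::
  "('q::countable, 'a, 'b, 'd::linorder) crm \<Rightarrow> 'q \<times> 'd list \<Rightarrow> nat \<times> 'd list \<Rightarrow> bool" where
  "srt_of_crm_rel M (q, R) (N, Rp) \<longleftrightarrow>
     (\<exists>\<pi>. (q, \<pi>, order_type R) \<in> srt_of_crm_states M \<and> N = to_nat (q, \<pi>, order_type R)
        \<and> length Rp = Suc (crm_nregs M) \<and> R = map ((!) Rp) \<pi>)"

lemma srt_of_crm_step_iff:
  assumes wf: "crm_wf M" and st: "(q, \<pi>, order_type R) \<in> srt_of_crm_states M"
    and len: "length Rp = Suc (crm_nregs M)" and R: "R = map ((!) Rp) \<pi>"
  shows "srt_step (srt_of_crm M) (to_nat (q, \<pi>, order_type R), Rp) (\<sigma>, d) (\<gamma>, e) (N', Rp') \<longleftrightarrow>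
    (\<exists>q' f out. crm_delta M q \<sigma> (order_type (d # R)) = Some (q', \<gamma>, f, out) \<and> e = (d # R) ! out
       \<and> N' = to_nat (q', map ((!) (free_slot \<pi> # \<pi>)) f, order_type (map ((!) (d # R)) f))
       \<and> Rp' = Rp[free_slot \<pi> := d])" (is "_ \<longleftrightarrow> ?rhs")
proof -
  let ?n = "crm_nregs M"
  let ?p = "free_slot \<pi>"
  define m where "m = map (\<lambda>i. if i = ?p then UNew else UOld) [0..<Suc ?n]"
  have \<pi>: "length \<pi> = ?n" "set \<pi> \<subseteq> {..?n}" and "q \<in> crm_states M"
    using st by (auto simp: srt_of_crm_states_def)
  have p: "?p \<notin> set \<pi>" "?p < length Rp"
    using free_slot_notin_le_length[of \<pi>] \<pi> len by auto
  have "map ((!) (map (cmp_of d) Rp)) \<pi> = map (cmp_of d) R"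
    using \<pi> len R by (auto simp: subset_iff)
  then have next_eq: "srt_of_crm_next M (q, \<pi>, order_type R) \<sigma> (map (cmp_of d) Rp) =
      map_option (\<lambda>(q', \<gamma>, f, out). (m, (?p # \<pi>) ! out, \<gamma>,
          (q', map ((!) (?p # \<pi>)) f, map (\<lambda>i. map (\<lambda>j. order_type (d # R) ! i ! j) f) f)))
        (crm_delta M q \<sigma> (order_type (d # R)))"
    by (simp add: srt_of_crm_next_def cons_order_type_eq m_def Let_def)
  have upd: "regs_update m d Rp = Rp[?p := d]"
    using len by (auto simp: m_def regs_update_def list_eq_iff_nth_eq nth_list_update simp del: upt_Suc)
  have delta: "map (\<lambda>i. map (\<lambda>j. order_type (d # R) ! i ! j) f) f = order_type (map ((!) (d # R)) f)
      \<and> Rp[?p := d] ! ((?p # \<pi>) ! out) = (d # R) ! out"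
    if "crm_delta M q \<sigma> (order_type (d # R)) = Some (q', \<gamma>', f, out)" for q' \<gamma>' f out
  proof -
    have "set f \<subseteq> {..<length (d # R)}" "out < length (d # R)"
      using wf that \<open>q \<in> crm_states M\<close> \<pi>(1) R unfolding crm_wf_def by fastforce+
    moreover have "map ((!) (Rp[?p := d])) (?p # \<pi>) = d # R"
      using map_nth_list_update_fresh[OF p] R by simp
    ultimately show ?thesis
      using order_type_map_nth by (metis length_map nth_map)
  qed
  have nregs: "nregs (srt_of_crm M) = Suc ?n"
    by (simp add: srt_of_crm_def)
  have "srt_step (srt_of_crm M) (to_nat (q, \<pi>, order_type R), Rp) (\<sigma>, d) (\<gamma>, e) (N', Rp') \<longleftrightarrow>
    (\<exists>m' u. (to_nat (q, \<pi>, order_type R), \<sigma>, map (cmp_of d) Rp, m', u, \<gamma>, N') \<in> transitions (srt_of_crm M)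
       \<and> Rp' = regs_update m' d Rp \<and> e = Rp' ! u)"
    using srt_step_iff[OF srt_wf_srt_of_crm[OF wf]] len nregs by simp
  also have "\<dots> \<longleftrightarrow> (\<exists>m' u st'. srt_of_crm_next M (q, \<pi>, order_type R) \<sigma> (map (cmp_of d) Rp) = Some (m', u, \<gamma>, st')
       \<and> N' = to_nat st' \<and> Rp' = regs_update m' d Rp \<and> e = Rp' ! u)"
    using srt_of_crm_transition_iff[OF st] len by auto
  also have "\<dots> \<longleftrightarrow> ?rhs"
    unfolding next_eq by (auto simp: upd delta simp del: upt_Suc)
  finally show ?thesis .
qed

lemma srt_of_crm_rel_step:
  assumes wf: "crm_wf M" and st: "(q, \<pi>, order_type R) \<in> srt_of_crm_states M"
    and len: "length Rp = Suc (crm_nregs M)" and R: "R = map ((!) Rp) \<pi>"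
    and delta: "crm_delta M q \<sigma> (order_type (d # R)) = Some (q', \<gamma>, f, out)"
  shows "srt_of_crm_rel M (q', map ((!) (d # R)) f)
    (to_nat (q', map ((!) (free_slot \<pi> # \<pi>)) f, order_type (map ((!) (d # R)) f)), Rp[free_slot \<pi> := d])"
proof -
  let ?n = "crm_nregs M"
  let ?p = "free_slot \<pi>"
  have \<pi>: "length \<pi> = ?n" "set \<pi> \<subseteq> {..?n}" and "q \<in> crm_states M"
    using st by (auto simp: srt_of_crm_states_def)
  then have f: "q' \<in> crm_states M" "length f = ?n" "set f \<subseteq> {..?n}"
    using wf delta unfolding crm_wf_def by blast+
  have "?p \<le> ?n"
    using free_slot_notin_le_length(2)[of \<pi>] \<pi> by simp
  then have "set (map ((!) (?p # \<pi>)) f) \<subseteq> {..?n}"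
    using f(3) \<pi> by (auto simp: subset_iff nth_Cons split: nat.splits)
  then have st': "(q', map ((!) (?p # \<pi>)) f, order_type (map ((!) (d # R)) f)) \<in> srt_of_crm_states M"
    using f by (simp add: srt_of_crm_states_def order_type_def)
  have R': "map ((!) (d # R)) f = map ((!) (Rp[?p := d])) (map ((!) (?p # \<pi>)) f)"
  proof -
    have "map ((!) (Rp[?p := d])) (?p # \<pi>) = d # R"
      using map_nth_list_update_fresh[of ?p \<pi> Rp d] free_slot_notin_le_length[of \<pi>] \<pi> len R by simp
    then have "(d # R) ! i = Rp[?p := d] ! ((?p # \<pi>) ! i)" if "i \<le> ?n" for i
      using that \<pi>(1) nth_map[of i "?p # \<pi>" "(!) (Rp[?p := d])"] by simp
    then show ?thesis
      using f(3) by (simp add: list_eq_iff_nth_eq subset_iff)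
  qed
  show ?thesis
    unfolding srt_of_crm_rel.simps
    by (rule exI[of _ "map ((!) (?p # \<pi>)) f"], intro conjI) (fact st', rule refl, simp add: len, fact R')
qed

lemma srt_of_crm_rel_crm_step:
  assumes wf: "crm_wf M" and rel: "srt_of_crm_rel M c C" and step: "crm_step M c x y c'"
  shows "\<exists>C'. srt_step (srt_of_crm M) C x y C' \<and> srt_of_crm_rel M c' C'"
proof -
  obtain q R N Rp \<sigma> d \<gamma> e q' R' where
    eqs: "c = (q, R)" "C = (N, Rp)" "x = (\<sigma>, d)" "y = (\<gamma>, e)" "c' = (q', R')"
    by (metis prod.exhaust)
  obtain \<pi> where st: "(q, \<pi>, order_type R) \<in> srt_of_crm_states M"
    and N: "N = to_nat (q, \<pi>, order_type R)" and len: "length Rp = Suc (crm_nregs M)"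
    and R: "R = map ((!) Rp) \<pi>"
    using rel unfolding eqs by auto
  obtain f out where delta: "crm_delta M q \<sigma> (order_type (d # R)) = Some (q', \<gamma>, f, out)"
    and R': "R' = map ((!) (d # R)) f" and e: "e = (d # R) ! out"
    using step unfolding eqs by auto
  let ?C' = "(to_nat (q', map ((!) (free_slot \<pi> # \<pi>)) f, order_type (map ((!) (d # R)) f)),
    Rp[free_slot \<pi> := d])"
  have "srt_step (srt_of_crm M) C x y ?C'"
    unfolding eqs N srt_of_crm_step_iff[OF wf st len R] using delta e by blast
  moreover have "srt_of_crm_rel M c' ?C'"
    unfolding eqs R' by (rule srt_of_crm_rel_step[OF wf st len R delta])
  ultimately show ?thesis
    by blast
qed

lemma srt_of_crm_rel_srt_step:
  assumes wf: "crm_wf M" and rel: "srt_of_crm_rel M c C" and step: "srt_step (srt_of_crm M) C x y C'"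
  shows "\<exists>c'. crm_step M c x y c' \<and> srt_of_crm_rel M c' C'"
proof -
  obtain q R N Rp \<sigma> d \<gamma> e N' Rp' where
    eqs: "c = (q, R)" "C = (N, Rp)" "x = (\<sigma>, d)" "y = (\<gamma>, e)" "C' = (N', Rp')"
    by (metis prod.exhaust)
  obtain \<pi> where st: "(q, \<pi>, order_type R) \<in> srt_of_crm_states M"
    and N: "N = to_nat (q, \<pi>, order_type R)" and len: "length Rp = Suc (crm_nregs M)"
    and R: "R = map ((!) Rp) \<pi>"
    using rel unfolding eqs by auto
  obtain q' f out where delta: "crm_delta M q \<sigma> (order_type (d # R)) = Some (q', \<gamma>, f, out)"
    and e: "e = (d # R) ! out"
    and C': "C' = (to_nat (q', map ((!) (free_slot \<pi> # \<pi>)) f, order_type (map ((!) (d # R)) f)),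
      Rp[free_slot \<pi> := d])"
    using step unfolding eqs N srt_of_crm_step_iff[OF wf st len R] by blast
  have "length R = crm_nregs M"
    using st R by (simp add: srt_of_crm_states_def)
  then have "crm_step M c x y (q', map ((!) (d # R)) f)"
    unfolding eqs using delta e by simp
  moreover have "srt_of_crm_rel M (q', map ((!) (d # R)) f) C'"
    unfolding C' by (rule srt_of_crm_rel_step[OF wf st len R delta])
  ultimately show ?thesis
    by blast
qed

lemma srt_of_crm_rel_init:
  assumes "crm_wf M"
  shows "srt_of_crm_rel M (crm_init M, crm_init_regs M) (init_state (srt_of_crm M), init_regs (srt_of_crm M))"
proof -
  have "length (crm_init_regs M) = crm_nregs M" "crm_init M \<in> crm_states M"
    using assms by (auto simp: crm_wf_def)
  then show ?thesis
    unfolding srt_of_crm_def srt_of_crm_rel.simps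
    by (intro exI[of _ "[0..<crm_nregs M]"])
      (auto simp: srt_of_crm_states_def order_type_def nth_append list_eq_iff_nth_eq)
qed

lemma srt_sem_srt_of_crm:
  assumes wf: "crm_wf M"
  shows "srt_sem (srt_of_crm M) = crm_sem M"
proof -
  have "step_run (crm_step M) (crm_init M, crm_init_regs M)
      = step_run (srt_step (srt_of_crm M)) (init_state (srt_of_crm M), init_regs (srt_of_crm M))"
    using step_run_bisim[of "srt_of_crm_rel M" "crm_step M" "srt_step (srt_of_crm M)",
        OF srt_of_crm_rel_crm_step[OF wf] srt_of_crm_rel_srt_step[OF wf] srt_of_crm_rel_init[OF wf]]
    by (intro ext)
  then show ?thesis
    unfolding crm_sem_def srt_sem_eq_zip_set by simp
qed

lemma DSRTA_definable_crm_sem: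
  fixes M :: "('q::countable, 'a::finite, 'b::finite, 'd::{linorder, group_add}) crm"
  assumes "crm_wf M"
  shows "DSRTA_definable (crm_sem M)"
  unfolding DSRTA_definable_def using assms
  by (intro exI[of _ "srt_of_crm M"])
    (simp add: srt_sem_srt_of_crm srt_wf_srt_of_crm srt_deterministic_srt_of_crm srt_add_free_srt_of_crm)

section \<open>Intersection and composition\<close>

definition srt_lookup ::
  "('a, 'b, 'd) srt \<Rightarrow> nat \<Rightarrow> 'a \<Rightarrow> cmp list \<Rightarrow> (upd list \<times> nat \<times> 'b \<times> nat) option" where
  "srt_lookup S q \<sigma> l =
     (if \<exists>r. (q, \<sigma>, l, r) \<in> transitions S then Some (THE r. (q, \<sigma>, l, r) \<in> transitions S) else None)"

lemma srt_lookup_eq_Some_iff: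
  assumes "srt_deterministic S"
  shows "srt_lookup S q \<sigma> l = Some r \<longleftrightarrow> (q, \<sigma>, l, r) \<in> transitions S"
proof -
  have the: "(THE r. (q, \<sigma>, l, r) \<in> transitions S) = r" if "(q, \<sigma>, l, r) \<in> transitions S" for r
    using that srt_deterministicD[OF assms] by (intro the_equality) blast+
  have lookup: "srt_lookup S q \<sigma> l = Some r" if "(q, \<sigma>, l, r) \<in> transitions S" for r
    unfolding srt_lookup_def using that by (subst if_P) (blast, simp add: the[OF that])
  show ?thesis
  proof
    assume "srt_lookup S q \<sigma> l = Some r"
    moreover from this obtain r0 where "(q, \<sigma>, l, r0) \<in> transitions S"
      unfolding srt_lookup_def by (metis option.distinct(1))
    ultimately show "(q, \<sigma>, l, r) \<in> transitions S"
      using lookup by fastforce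
  qed (rule lookup)
qed

text \<open>The sources in \<open>d # xs @ R @ ys\<close>, where \<open>off = length xs\<close>, of the registers \<open>R\<close> after the
add-free update \<open>m\<close>, when the value written by \<open>UNew\<close> sits at source \<open>s\<close>.\<close>

definition upd_sources :: "upd list \<Rightarrow> nat \<Rightarrow> nat \<Rightarrow> nat list" where
  "upd_sources m s off = map (\<lambda>i. if m ! i = UNew then s else Suc (off + i)) [0..<length m]"

lemma nth_Cons_append_middle:
  "i < length R \<Longrightarrow> (d # xs @ R @ ys) ! Suc (length xs + i) = R ! i"
  by (simp add: nth_append)

lemma map_nth_upd_sources:
  assumes "set m \<subseteq> {UOld, UNew}" "length m = length R"
  shows "map ((!) (d # xs @ R @ ys)) (upd_sources m s (length xs))
    = regs_update m ((d # xs @ R @ ys) ! s) R"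
proof (rule nth_equalityI)
  fix i
  assume "i < length (map ((!) (d # xs @ R @ ys)) (upd_sources m s (length xs)))"
  then have i: "i < length R"
    using assms(2) by (simp add: upd_sources_def)
  then have "m ! i \<in> {UOld, UNew}"
    using assms by (metis nth_mem subsetD)
  then show "map ((!) (d # xs @ R @ ys)) (upd_sources m s (length xs)) ! i
      = regs_update m ((d # xs @ R @ ys) ! s) R ! i"
    using i assms(2) nth_Cons_append_middle[OF i]
    by (auto simp: upd_sources_def regs_update_def simp del: nth_Cons_Suc)
qed (simp add: assms(2) upd_sources_def regs_update_def)

definition order_type_row :: "cmp list list \<Rightarrow> nat \<Rightarrow> nat \<Rightarrow> nat \<Rightarrow> cmp list" where
  "order_type_row T s off k = map (\<lambda>j. T ! s ! Suc (off + j)) [0..<k]"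

lemma order_type_row_order_type:
  assumes "s \<le> length xs + length R + length ys"
  shows "order_type_row (order_type (d # xs @ R @ ys)) s (length xs) (length R)
    = map (cmp_of ((d # xs @ R @ ys) ! s)) R"
proof (rule nth_equalityI)
  fix j
  assume "j < length (order_type_row (order_type (d # xs @ R @ ys)) s (length xs) (length R))"
  then have j: "j < length R"
    by (simp add: order_type_row_def)
  with assms show "order_type_row (order_type (d # xs @ R @ ys)) s (length xs) (length R) ! j
      = map (cmp_of ((d # xs @ R @ ys) ! s)) R ! j"
    using nth_Cons_append_middle[OF j, of d xs ys]
    by (simp add: order_type_row_def del: nth_Cons_Suc)
qed (simp add: order_type_row_def)

fun concat_config ::
  "nat \<Rightarrow> nat \<Rightarrow> ('q1 \<times> 'q2) \<times> 'd list \<Rightarrow> ('q1 \<times> 'd list) \<times> ('q2 \<times> 'd list) \<Rightarrow> bool" where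
  "concat_config k1 k2 (q, R) ((q1, R1), (q2, R2)) \<longleftrightarrow>
     q = (q1, q2) \<and> R = R1 @ R2 \<and> length R1 = k1 \<and> length R2 = k2"

lemma step_run_crm_concat_config:
  assumes step_iff: "\<And>q1 q2 R1 R2 x y q1' q2' R'. length R1 = k1 \<Longrightarrow> length R2 = k2 \<Longrightarrow>
      crm_step M ((q1, q2), R1 @ R2) x y ((q1', q2'), R') \<longleftrightarrow>
      (\<exists>R1' R2'. R' = R1' @ R2' \<and> step ((q1, R1), (q2, R2)) x y ((q1', R1'), (q2', R2')))"
    and step_length: "\<And>C x y q1' R1' q2' R2'. step C x y ((q1', R1'), (q2', R2')) \<Longrightarrow>
      length R1' = k1 \<and> length R2' = k2"
    and len: "length R1 = k1" "length R2 = k2"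
  shows "step_run (crm_step M) ((q1, q2), R1 @ R2) s t \<longleftrightarrow> step_run step ((q1, R1), (q2, R2)) s t"
proof (rule step_run_bisim[where rel = "concat_config k1 k2"])
  fix c C x y c'
  assume rel: "concat_config k1 k2 c C" and step: "crm_step M c x y c'"
  obtain q1 R1 q2 R2 q1' q2' R' where eqs: "C = ((q1, R1), (q2, R2))" "c' = ((q1', q2'), R')"
    by (metis prod.exhaust)
  have c: "c = ((q1, q2), R1 @ R2)" and lens: "length R1 = k1" "length R2 = k2"
    using rel eqs by (cases c, auto)+
  obtain R1' R2' where "R' = R1' @ R2'" "step C x y ((q1', R1'), (q2', R2'))"
    using step unfolding c eqs step_iff[OF lens] by blast
  with step_length show "\<exists>C'. step C x y C' \<and> concat_config k1 k2 c' C'"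
    unfolding eqs by (intro exI[of _ "((q1', R1'), (q2', R2'))"]) simp
next
  fix c C x y C'
  assume rel: "concat_config k1 k2 c C" and step: "step C x y C'"
  obtain q1 R1 q2 R2 q1' R1' q2' R2' where eqs: "C = ((q1, R1), (q2, R2))" "C' = ((q1', R1'), (q2', R2'))"
    by (metis prod.exhaust)
  have c: "c = ((q1, q2), R1 @ R2)" and lens: "length R1 = k1" "length R2 = k2"
    using rel eqs by (cases c, auto)+
  have "crm_step M c x y ((q1', q2'), R1' @ R2')"
    using step unfolding c eqs step_iff[OF lens] by blast
  with step_length step show "\<exists>c'. crm_step M c x y c' \<and> concat_config k1 k2 c' C'"
    unfolding eqs by (intro exI[of _ "((q1', q2'), R1' @ R2')"]) simp
next
  show "concat_config k1 k2 ((q1, q2), R1 @ R2) ((q1, R1), (q2, R2))"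
    using len by simp
qed

text \<open>The outputs agree iff their two sources hold equal values.\<close>

definition crm_Int :: "('a, 'b, 'd) srt \<Rightarrow> ('a, 'b, 'd) srt \<Rightarrow> (nat \<times> nat, 'a, 'b, 'd) crm" where
  "crm_Int S1 S2 = \<lparr>crm_states = states S1 \<times> states S2,
     crm_init = (init_state S1, init_state S2), crm_nregs = nregs S1 + nregs S2,
     crm_init_regs = init_regs S1 @ init_regs S2,
     crm_delta = (\<lambda>(q1, q2) \<sigma> T.
       case (srt_lookup S1 q1 \<sigma> (order_type_row T 0 0 (nregs S1)),
             srt_lookup S2 q2 \<sigma> (order_type_row T 0 (nregs S1) (nregs S2))) of
         (Some (m1, u1, \<gamma>1, q1'), Some (m2, u2, \<gamma>2, q2')) \<Rightarrow>
           let f1 = upd_sources m1 0 0; f2 = upd_sources m2 0 (nregs S1) in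
           if \<gamma>1 = \<gamma>2 \<and> T ! (f1 ! u1) ! (f2 ! u2) = CEq
           then Some ((q1', q2'), \<gamma>1, f1 @ f2, f1 ! u1) else None
       | _ \<Rightarrow> None)\<rparr>"

lemma crm_Int_simps [simp]:
  "crm_states (crm_Int S1 S2) = states S1 \<times> states S2"
  "crm_init (crm_Int S1 S2) = (init_state S1, init_state S2)"
  "crm_nregs (crm_Int S1 S2) = nregs S1 + nregs S2"
  "crm_init_regs (crm_Int S1 S2) = init_regs S1 @ init_regs S2"
  by (simp_all add: crm_Int_def)

text \<open>The intermediate value is never stored: \<open>S2\<close> compares and copies it from the source \<open>v\<close>
of the output of \<open>S1\<close>.\<close>

definition crm_cascade :: "('a, 'b, 'd) srt \<Rightarrow> ('b, 'c, 'd) srt \<Rightarrow> (nat \<times> nat, 'a, 'c, 'd) crm" where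
  "crm_cascade S1 S2 = \<lparr>crm_states = states S1 \<times> states S2,
     crm_init = (init_state S1, init_state S2), crm_nregs = nregs S1 + nregs S2,
     crm_init_regs = init_regs S1 @ init_regs S2,
     crm_delta = (\<lambda>(q1, q2) \<sigma> T.
       case srt_lookup S1 q1 \<sigma> (order_type_row T 0 0 (nregs S1)) of
         None \<Rightarrow> None
       | Some (m1, u1, \<gamma>, q1') \<Rightarrow>
           let f1 = upd_sources m1 0 0; v = f1 ! u1 in
           (case srt_lookup S2 q2 \<gamma> (order_type_row T v (nregs S1) (nregs S2)) of
              None \<Rightarrow> None
            | Some (m2, u2, \<theta>, q2') \<Rightarrow>
                let f2 = upd_sources m2 v (nregs S1) in
                Some ((q1', q2'), \<theta>, f1 @ f2, f2 ! u2)))\<rparr>"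

lemma crm_cascade_simps [simp]:
  "crm_states (crm_cascade S1 S2) = states S1 \<times> states S2"
  "crm_init (crm_cascade S1 S2) = (init_state S1, init_state S2)"
  "crm_nregs (crm_cascade S1 S2) = nregs S1 + nregs S2"
  "crm_init_regs (crm_cascade S1 S2) = init_regs S1 @ init_regs S2"
  by (simp_all add: crm_cascade_def)

lemma srt_transition_sources:
  assumes "srt_wf S" "srt_add_free S" "(q, \<sigma>, l, m, u, \<gamma>, q') \<in> transitions S"
    and "length R = nregs S"
  shows "map ((!) (d # xs @ R @ ys)) (upd_sources m s (length xs))
      = regs_update m ((d # xs @ R @ ys) ! s) R"
    and "(d # xs @ R @ ys) ! (upd_sources m s (length xs) ! u)
      = regs_update m ((d # xs @ R @ ys) ! s) R ! u"
    and "s \<le> length xs + length R \<Longrightarrow> upd_sources m s (length xs) ! u \<le> length xs + length R"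
proof -
  have m: "set m \<subseteq> {UOld, UNew}" "length m = length R" "u < length m"
    using srt_transitionD[OF assms(1-3)] assms(4) by auto
  show map_eq: "map ((!) (d # xs @ R @ ys)) (upd_sources m s (length xs))
      = regs_update m ((d # xs @ R @ ys) ! s) R"
    using map_nth_upd_sources[OF m(1,2)] .
  show "(d # xs @ R @ ys) ! (upd_sources m s (length xs) ! u)
      = regs_update m ((d # xs @ R @ ys) ! s) R ! u"
    using map_eq nth_map[of u "upd_sources m s (length xs)" "(!) (d # xs @ R @ ys)"] m(3)
    by (simp add: upd_sources_def)
  show "s \<le> length xs + length R \<Longrightarrow> upd_sources m s (length xs) ! u \<le> length xs + length R"
    using m(2,3) by (simp add: upd_sources_def)
qed

context
  fixes S1 S2 :: "('a, 'b, 'd::{linorder, group_add}) srt"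
  assumes S1: "srt_wf S1" "srt_deterministic S1" "srt_add_free S1"
    and S2: "srt_wf S2" "srt_deterministic S2" "srt_add_free S2"
begin

lemma crm_delta_crm_Int_eq_Some_iff:
  assumes len: "length R1 = nregs S1" "length R2 = nregs S2"
  shows "crm_delta (crm_Int S1 S2) (q1, q2) \<sigma> (order_type (d # R1 @ R2)) = Some (q', \<gamma>, f, out) \<longleftrightarrow>
    (\<exists>m1 u1 q1' m2 u2 q2'. (q1, \<sigma>, map (cmp_of d) R1, m1, u1, \<gamma>, q1') \<in> transitions S1
       \<and> (q2, \<sigma>, map (cmp_of d) R2, m2, u2, \<gamma>, q2') \<in> transitions S2
       \<and> regs_update m1 d R1 ! u1 = regs_update m2 d R2 ! u2
       \<and> q' = (q1', q2') \<and> f = upd_sources m1 0 0 @ upd_sources m2 0 (nregs S1)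
       \<and> out = upd_sources m1 0 0 ! u1)" (is "?lhs \<longleftrightarrow> ?rhs")
proof -
  let ?vs = "d # R1 @ R2"
  have rows: "order_type_row (order_type ?vs) 0 0 (nregs S1) = map (cmp_of d) R1"
    "order_type_row (order_type ?vs) 0 (nregs S1) (nregs S2) = map (cmp_of d) R2"
    using order_type_row_order_type[of 0 "[]" R1 R2 d] order_type_row_order_type[of 0 R1 R2 "[]" d] len
    by simp_all
  have out_eq: "order_type ?vs ! (upd_sources m1 0 0 ! u1) ! (upd_sources m2 0 (nregs S1) ! u2) = CEq
      \<longleftrightarrow> regs_update m1 d R1 ! u1 = regs_update m2 d R2 ! u2"
    if "(q1, \<sigma>, l1, m1, u1, \<gamma>1, q1') \<in> transitions S1" "(q2, \<sigma>, l2, m2, u2, \<gamma>2, q2') \<in> transitions S2"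
    for l1 m1 u1 \<gamma>1 q1' l2 m2 u2 \<gamma>2 q2'
  proof -
    have "?vs ! (upd_sources m1 0 0 ! u1) = regs_update m1 d R1 ! u1"
      "upd_sources m1 0 0 ! u1 \<le> nregs S1 + nregs S2"
      using srt_transition_sources(2)[OF S1(1,3) that(1) len(1), of d "[]" R2 0]
        srt_transition_sources(3)[OF S1(1,3) that(1) len(1), of 0 "[]"] len by simp_all
    moreover have "?vs ! (upd_sources m2 0 (nregs S1) ! u2) = regs_update m2 d R2 ! u2"
      "upd_sources m2 0 (nregs S1) ! u2 \<le> nregs S1 + nregs S2"
      using srt_transition_sources(2)[OF S2(1,3) that(2) len(2), of d R1 "[]" 0]
        srt_transition_sources(3)[OF S2(1,3) that(2) len(2), of 0 R1] len by simp_all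
    ultimately show ?thesis
      using len by (simp del: nth_Cons_Suc)
  qed
  show ?thesis
  proof
    assume delta: ?lhs
    obtain m1 u1 \<gamma>1 q1' m2 u2 \<gamma>2 q2' where
      lookup: "srt_lookup S1 q1 \<sigma> (map (cmp_of d) R1) = Some (m1, u1, \<gamma>1, q1')"
        "srt_lookup S2 q2 \<sigma> (map (cmp_of d) R2) = Some (m2, u2, \<gamma>2, q2')"
      using delta unfolding crm_Int_def by (auto simp: rows split: option.splits)
    then have tr: "(q1, \<sigma>, map (cmp_of d) R1, m1, u1, \<gamma>1, q1') \<in> transitions S1"
      "(q2, \<sigma>, map (cmp_of d) R2, m2, u2, \<gamma>2, q2') \<in> transitions S2"
      by (simp_all add: srt_lookup_eq_Some_iff S1(2) S2(2))
    moreover have "\<gamma>1 = \<gamma> \<and> \<gamma>2 = \<gamma> \<and> regs_update m1 d R1 ! u1 = regs_update m2 d R2 ! u2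
        \<and> q' = (q1', q2') \<and> f = upd_sources m1 0 0 @ upd_sources m2 0 (nregs S1)
        \<and> out = upd_sources m1 0 0 ! u1"
      using delta lookup unfolding crm_Int_def by (auto simp: rows Let_def out_eq[OF tr] split: if_splits)
    ultimately show ?rhs
      by blast
  next
    assume ?rhs
    then obtain m1 u1 q1' m2 u2 q2' where
      tr1: "(q1, \<sigma>, map (cmp_of d) R1, m1, u1, \<gamma>, q1') \<in> transitions S1" and
      tr2: "(q2, \<sigma>, map (cmp_of d) R2, m2, u2, \<gamma>, q2') \<in> transitions S2" and
      "regs_update m1 d R1 ! u1 = regs_update m2 d R2 ! u2" "q' = (q1', q2')"
        "f = upd_sources m1 0 0 @ upd_sources m2 0 (nregs S1)" "out = upd_sources m1 0 0 ! u1"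
      by blast
    moreover have "srt_lookup S1 q1 \<sigma> (map (cmp_of d) R1) = Some (m1, u1, \<gamma>, q1')"
      "srt_lookup S2 q2 \<sigma> (map (cmp_of d) R2) = Some (m2, u2, \<gamma>, q2')"
      using tr1 tr2 by (simp_all add: srt_lookup_eq_Some_iff S1(2) S2(2))
    ultimately show ?lhs
      unfolding crm_Int_def using out_eq[OF tr1 tr2] by (simp add: rows Let_def)
  qed
qed

lemma crm_step_crm_Int_iff:
  assumes len: "length R1 = nregs S1" "length R2 = nregs S2"
  shows "crm_step (crm_Int S1 S2) ((q1, q2), R1 @ R2) (\<sigma>, d) (\<gamma>, e) ((q1', q2'), R') \<longleftrightarrow>
    (\<exists>R1' R2'. R' = R1' @ R2' \<and> srt_step S1 (q1, R1) (\<sigma>, d) (\<gamma>, e) (q1', R1')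
       \<and> srt_step S2 (q2, R2) (\<sigma>, d) (\<gamma>, e) (q2', R2'))" (is "?lhs \<longleftrightarrow> ?rhs")
proof -
  have sources: "map ((!) (d # R1 @ R2)) (upd_sources m1 0 0 @ upd_sources m2 0 (nregs S1))
        = regs_update m1 d R1 @ regs_update m2 d R2
      \<and> (d # R1 @ R2) ! (upd_sources m1 0 0 ! u1) = regs_update m1 d R1 ! u1"
    if "(q1, \<sigma>, l1, m1, u1, \<gamma>1, q1'') \<in> transitions S1" "(q2, \<sigma>, l2, m2, u2, \<gamma>2, q2'') \<in> transitions S2"
    for l1 m1 u1 \<gamma>1 q1'' l2 m2 u2 \<gamma>2 q2''
    using srt_transition_sources(1,2)[OF S1(1,3) that(1) len(1), of d "[]" R2 0]
      srt_transition_sources(1)[OF S2(1,3) that(2) len(2), of d R1 "[]" 0] len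
    by simp
  show ?thesis
  proof
    assume ?lhs
    then obtain m1 u1 m2 u2 where
      tr1: "(q1, \<sigma>, map (cmp_of d) R1, m1, u1, \<gamma>, q1') \<in> transitions S1" and
      tr2: "(q2, \<sigma>, map (cmp_of d) R2, m2, u2, \<gamma>, q2') \<in> transitions S2" and
      "regs_update m1 d R1 ! u1 = regs_update m2 d R2 ! u2"
      "R' = map ((!) (d # R1 @ R2)) (upd_sources m1 0 0 @ upd_sources m2 0 (nregs S1))"
      "e = (d # R1 @ R2) ! (upd_sources m1 0 0 ! u1)"
      using len by (auto simp: crm_delta_crm_Int_eq_Some_iff)
    then have "R' = regs_update m1 d R1 @ regs_update m2 d R2"
      and e: "e = regs_update m1 d R1 ! u1" "e = regs_update m2 d R2 ! u2"
      using sources[OF tr1 tr2] by simp_all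
    moreover have "srt_step S1 (q1, R1) (\<sigma>, d) (\<gamma>, e) (q1', regs_update m1 d R1)"
      using tr1 e(1) len(1) by (auto simp: srt_step_iff S1(1))
    moreover have "srt_step S2 (q2, R2) (\<sigma>, d) (\<gamma>, e) (q2', regs_update m2 d R2)"
      using tr2 e(2) len(2) by (auto simp: srt_step_iff S2(1))
    ultimately show ?rhs
      by blast
  next
    assume ?rhs
    then obtain m1 u1 m2 u2 where
      tr1: "(q1, \<sigma>, map (cmp_of d) R1, m1, u1, \<gamma>, q1') \<in> transitions S1" and
      tr2: "(q2, \<sigma>, map (cmp_of d) R2, m2, u2, \<gamma>, q2') \<in> transitions S2" and
      R': "R' = regs_update m1 d R1 @ regs_update m2 d R2" and
      e: "e = regs_update m1 d R1 ! u1" "e = regs_update m2 d R2 ! u2"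
      using len by (auto simp: srt_step_iff S1(1) S2(1))
    have "crm_delta (crm_Int S1 S2) (q1, q2) \<sigma> (order_type (d # R1 @ R2))
        = Some ((q1', q2'), \<gamma>, upd_sources m1 0 0 @ upd_sources m2 0 (nregs S1), upd_sources m1 0 0 ! u1)"
      unfolding crm_delta_crm_Int_eq_Some_iff[OF len] using tr1 tr2 e by blast
    then show ?lhs
      using sources[OF tr1 tr2] R' e len by simp
  qed
qed

lemma crm_wf_crm_Int: "crm_wf (crm_Int S1 S2)"
proof -
  have "q' \<in> states S1 \<times> states S2 \<and> length f = nregs S1 + nregs S2
      \<and> set f \<subseteq> {..nregs S1 + nregs S2} \<and> out \<le> nregs S1 + nregs S2"
    if delta: "crm_delta (crm_Int S1 S2) q \<sigma> T = Some (q', \<gamma>, f, out)" for q \<sigma> T q' \<gamma> f out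
  proof -
    obtain q1 q2 where q: "q = (q1, q2)"
      by fastforce
    obtain m1 u1 \<gamma>1 q1' m2 u2 \<gamma>2 q2' where
      lookup: "srt_lookup S1 q1 \<sigma> (order_type_row T 0 0 (nregs S1)) = Some (m1, u1, \<gamma>1, q1')"
        "srt_lookup S2 q2 \<sigma> (order_type_row T 0 (nregs S1) (nregs S2)) = Some (m2, u2, \<gamma>2, q2')"
      using delta unfolding q crm_Int_def by (auto split: option.splits)
    then have res: "q' = (q1', q2')" "f = upd_sources m1 0 0 @ upd_sources m2 0 (nregs S1)"
        "out = upd_sources m1 0 0 ! u1"
      using delta unfolding q crm_Int_def by (auto simp: Let_def split: if_splits)
    have tr: "(q1, \<sigma>, order_type_row T 0 0 (nregs S1), m1, u1, \<gamma>1, q1') \<in> transitions S1"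
        "(q2, \<sigma>, order_type_row T 0 (nregs S1) (nregs S2), m2, u2, \<gamma>2, q2') \<in> transitions S2"
      using lookup by (simp_all add: srt_lookup_eq_Some_iff S1(2) S2(2))
    from res show ?thesis
      using srt_transitionD[OF S1(1,3) tr(1)] srt_transitionD[OF S2(1,3) tr(2)]
      by (auto simp: upd_sources_def nth_append)
  qed
  then show ?thesis
    using S1(1) S2(1) by (auto simp: crm_wf_def srt_wf_def)
qed

lemma srt_sem_Int_eq_crm_sem: "srt_sem S1 \<inter> srt_sem S2 = crm_sem (crm_Int S1 S2)"
proof -
  have len: "length (init_regs S1) = nregs S1" "length (init_regs S2) = nregs S2"
    using S1(1) S2(1) by (simp_all add: srt_wf_def)
  have "step_run (crm_step (crm_Int S1 S2)) ((init_state S1, init_state S2), init_regs S1 @ init_regs S2) s t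
      \<longleftrightarrow> step_run (step_prod (srt_step S1) (srt_step S2))
        ((init_state S1, init_regs S1), (init_state S2, init_regs S2)) s t" for s t
  proof (rule step_run_crm_concat_config[OF _ _ len])
    show "crm_step (crm_Int S1 S2) ((q1, q2), R1 @ R2) x y ((q1', q2'), R') \<longleftrightarrow>
        (\<exists>R1' R2'. R' = R1' @ R2'
           \<and> step_prod (srt_step S1) (srt_step S2) ((q1, R1), (q2, R2)) x y ((q1', R1'), (q2', R2')))"
      if "length R1 = nregs S1" "length R2 = nregs S2" for q1 q2 R1 R2 x y q1' q2' R'
      using crm_step_crm_Int_iff[OF that] by (cases x, cases y) (simp add: step_prod_def)
  qed (auto simp: step_prod_def dest: srt_step_length)
  then have "step_run (crm_step (crm_Int S1 S2)) ((init_state S1, init_state S2), init_regs S1 @ init_regs S2)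
      = (\<lambda>s t. step_run (srt_step S1) (init_state S1, init_regs S1) s t
          \<and> step_run (srt_step S2) (init_state S2, init_regs S2) s t)"
    by (intro ext) (simp add: step_run_prod)
  then show ?thesis
    by (simp add: crm_sem_def srt_sem_eq_zip_set zip_set_Int)
qed

end

context
  fixes S1 :: "('a, 'b, 'd::{linorder, group_add}) srt" and S2 :: "('b, 'c, 'd) srt"
  assumes S1: "srt_wf S1" "srt_deterministic S1" "srt_add_free S1"
    and S2: "srt_wf S2" "srt_deterministic S2" "srt_add_free S2"
begin

lemma crm_delta_crm_cascade_eq_Some_iff:
  assumes len: "length R1 = nregs S1" "length R2 = nregs S2"
  shows "crm_delta (crm_cascade S1 S2) (q1, q2) \<sigma> (order_type (d # R1 @ R2)) = Some (q', \<theta>, f, out) \<longleftrightarrow>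
    (\<exists>m1 u1 \<gamma> q1' m2 u2 q2'. (q1, \<sigma>, map (cmp_of d) R1, m1, u1, \<gamma>, q1') \<in> transitions S1
       \<and> (q2, \<gamma>, map (cmp_of (regs_update m1 d R1 ! u1)) R2, m2, u2, \<theta>, q2') \<in> transitions S2
       \<and> q' = (q1', q2')
       \<and> f = upd_sources m1 0 0 @ upd_sources m2 (upd_sources m1 0 0 ! u1) (nregs S1)
       \<and> out = upd_sources m2 (upd_sources m1 0 0 ! u1) (nregs S1) ! u2)" (is "?lhs \<longleftrightarrow> ?rhs")
proof -
  let ?vs = "d # R1 @ R2"
  have row1: "order_type_row (order_type ?vs) 0 0 (nregs S1) = map (cmp_of d) R1"
    using order_type_row_order_type[of 0 "[]" R1 R2 d] len by simp
  have row2: "order_type_row (order_type ?vs) (upd_sources m1 0 0 ! u1) (nregs S1) (nregs S2)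
      = map (cmp_of (regs_update m1 d R1 ! u1)) R2"
    if "(q1, \<sigma>, l1, m1, u1, \<gamma>, q1') \<in> transitions S1" for l1 m1 u1 \<gamma> q1'
  proof -
    have "?vs ! (upd_sources m1 0 0 ! u1) = regs_update m1 d R1 ! u1"
      "upd_sources m1 0 0 ! u1 \<le> nregs S1"
      using srt_transition_sources(2)[OF S1(1,3) that len(1), of d "[]" R2 0]
        srt_transition_sources(3)[OF S1(1,3) that len(1), of 0 "[]"] len by simp_all
    then show ?thesis
      using order_type_row_order_type[of "upd_sources m1 0 0 ! u1" R1 R2 "[]" d] len by simp
  qed
  show ?thesis
  proof
    assume delta: ?lhs
    obtain m1 u1 \<gamma> q1' where lookup1: "srt_lookup S1 q1 \<sigma> (map (cmp_of d) R1) = Some (m1, u1, \<gamma>, q1')"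
      using delta unfolding crm_cascade_def by (auto simp: row1 split: option.splits)
    then have tr1: "(q1, \<sigma>, map (cmp_of d) R1, m1, u1, \<gamma>, q1') \<in> transitions S1"
      by (simp add: srt_lookup_eq_Some_iff S1(2))
    obtain m2 u2 \<theta>' q2' where
      lookup2: "srt_lookup S2 q2 \<gamma> (map (cmp_of (regs_update m1 d R1 ! u1)) R2) = Some (m2, u2, \<theta>', q2')"
      using delta lookup1 unfolding crm_cascade_def by (auto simp: row1 row2[OF tr1] Let_def split: option.splits)
    then have tr2: "(q2, \<gamma>, map (cmp_of (regs_update m1 d R1 ! u1)) R2, m2, u2, \<theta>', q2') \<in> transitions S2"
      by (simp add: srt_lookup_eq_Some_iff S2(2))
    have "\<theta>' = \<theta> \<and> q' = (q1', q2')
        \<and> f = upd_sources m1 0 0 @ upd_sources m2 (upd_sources m1 0 0 ! u1) (nregs S1)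
        \<and> out = upd_sources m2 (upd_sources m1 0 0 ! u1) (nregs S1) ! u2"
      using delta lookup1 lookup2 unfolding crm_cascade_def by (auto simp: row1 row2[OF tr1] Let_def)
    with tr1 tr2 show ?rhs
      by blast
  next
    assume ?rhs
    then obtain m1 u1 \<gamma> q1' m2 u2 q2' where
      tr1: "(q1, \<sigma>, map (cmp_of d) R1, m1, u1, \<gamma>, q1') \<in> transitions S1" and
      tr2: "(q2, \<gamma>, map (cmp_of (regs_update m1 d R1 ! u1)) R2, m2, u2, \<theta>, q2') \<in> transitions S2" and
      "q' = (q1', q2')" "f = upd_sources m1 0 0 @ upd_sources m2 (upd_sources m1 0 0 ! u1) (nregs S1)"
        "out = upd_sources m2 (upd_sources m1 0 0 ! u1) (nregs S1) ! u2"
      by blast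
    moreover have "srt_lookup S1 q1 \<sigma> (map (cmp_of d) R1) = Some (m1, u1, \<gamma>, q1')"
      "srt_lookup S2 q2 \<gamma> (map (cmp_of (regs_update m1 d R1 ! u1)) R2) = Some (m2, u2, \<theta>, q2')"
      using tr1 tr2 by (simp_all add: srt_lookup_eq_Some_iff S1(2) S2(2))
    ultimately show ?lhs
      unfolding crm_cascade_def by (simp add: row1 row2[OF tr1] Let_def)
  qed
qed

lemma crm_step_crm_cascade_iff:
  assumes len: "length R1 = nregs S1" "length R2 = nregs S2"
  shows "crm_step (crm_cascade S1 S2) ((q1, q2), R1 @ R2) (\<sigma>, d) (\<theta>, e) ((q1', q2'), R') \<longleftrightarrow>
    (\<exists>z R1' R2'. R' = R1' @ R2' \<and> srt_step S1 (q1, R1) (\<sigma>, d) z (q1', R1')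
       \<and> srt_step S2 (q2, R2) z (\<theta>, e) (q2', R2'))" (is "?lhs \<longleftrightarrow> ?rhs")
proof -
  let ?vs = "d # R1 @ R2"
  have sources: "map ((!) ?vs) (upd_sources m1 0 0 @ upd_sources m2 (upd_sources m1 0 0 ! u1) (nregs S1))
        = regs_update m1 d R1 @ regs_update m2 (regs_update m1 d R1 ! u1) R2
      \<and> ?vs ! (upd_sources m2 (upd_sources m1 0 0 ! u1) (nregs S1) ! u2)
        = regs_update m2 (regs_update m1 d R1 ! u1) R2 ! u2"
    if "(q1, \<sigma>, l1, m1, u1, \<gamma>, q1'') \<in> transitions S1" "(q2, \<gamma>, l2, m2, u2, \<theta>', q2'') \<in> transitions S2"
    for l1 m1 u1 \<gamma> q1'' l2 m2 u2 \<theta>' q2''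
  proof -
    have "?vs ! (upd_sources m1 0 0 ! u1) = regs_update m1 d R1 ! u1"
      "map ((!) ?vs) (upd_sources m1 0 0) = regs_update m1 d R1"
      using srt_transition_sources(1,2)[OF S1(1,3) that(1) len(1), of d "[]" R2 0] by simp_all
    then show ?thesis
      using srt_transition_sources(1,2)[OF S2(1,3) that(2) len(2), of d R1 "[]" "upd_sources m1 0 0 ! u1"]
        len by simp
  qed
  show ?thesis
  proof
    assume ?lhs
    then obtain m1 u1 \<gamma> m2 u2 where
      tr1: "(q1, \<sigma>, map (cmp_of d) R1, m1, u1, \<gamma>, q1') \<in> transitions S1" and
      tr2: "(q2, \<gamma>, map (cmp_of (regs_update m1 d R1 ! u1)) R2, m2, u2, \<theta>, q2') \<in> transitions S2" and
      "R' = map ((!) ?vs) (upd_sources m1 0 0 @ upd_sources m2 (upd_sources m1 0 0 ! u1) (nregs S1))"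
      "e = ?vs ! (upd_sources m2 (upd_sources m1 0 0 ! u1) (nregs S1) ! u2)"
      using len by (auto simp: crm_delta_crm_cascade_eq_Some_iff)
    then have R': "R' = regs_update m1 d R1 @ regs_update m2 (regs_update m1 d R1 ! u1) R2"
      and e: "e = regs_update m2 (regs_update m1 d R1 ! u1) R2 ! u2"
      using sources[OF tr1 tr2] by simp_all
    have "srt_step S1 (q1, R1) (\<sigma>, d) (\<gamma>, regs_update m1 d R1 ! u1) (q1', regs_update m1 d R1)"
      using tr1 len(1) by (auto simp: srt_step_iff S1(1))
    moreover have "srt_step S2 (q2, R2) (\<gamma>, regs_update m1 d R1 ! u1) (\<theta>, e)
        (q2', regs_update m2 (regs_update m1 d R1 ! u1) R2)"
      using tr2 e len(2) by (auto simp: srt_step_iff S2(1))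
    ultimately show ?rhs
      using R' by blast
  next
    assume ?rhs
    then obtain \<gamma> v R1' R2' where R': "R' = R1' @ R2'" and
      "srt_step S1 (q1, R1) (\<sigma>, d) (\<gamma>, v) (q1', R1')" "srt_step S2 (q2, R2) (\<gamma>, v) (\<theta>, e) (q2', R2')"
      by auto
    then obtain m1 u1 m2 u2 where
      tr1: "(q1, \<sigma>, map (cmp_of d) R1, m1, u1, \<gamma>, q1') \<in> transitions S1" and
      tr2: "(q2, \<gamma>, map (cmp_of (regs_update m1 d R1 ! u1)) R2, m2, u2, \<theta>, q2') \<in> transitions S2" and
      regs: "R1' = regs_update m1 d R1" "R2' = regs_update m2 (regs_update m1 d R1 ! u1) R2" and
      e: "e = regs_update m2 (regs_update m1 d R1 ! u1) R2 ! u2"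
      using len by (auto simp: srt_step_iff S1(1) S2(1))
    have "crm_delta (crm_cascade S1 S2) (q1, q2) \<sigma> (order_type ?vs) = Some ((q1', q2'), \<theta>,
        upd_sources m1 0 0 @ upd_sources m2 (upd_sources m1 0 0 ! u1) (nregs S1),
        upd_sources m2 (upd_sources m1 0 0 ! u1) (nregs S1) ! u2)"
      unfolding crm_delta_crm_cascade_eq_Some_iff[OF len] using tr1 tr2 by blast
    then show ?lhs
      using sources[OF tr1 tr2] R' regs e len by simp
  qed
qed

lemma crm_wf_crm_cascade: "crm_wf (crm_cascade S1 S2)"
proof -
  have "q' \<in> states S1 \<times> states S2 \<and> length f = nregs S1 + nregs S2
      \<and> set f \<subseteq> {..nregs S1 + nregs S2} \<and> out \<le> nregs S1 + nregs S2"
    if delta: "crm_delta (crm_cascade S1 S2) q \<sigma> T = Some (q', \<theta>, f, out)" for q \<sigma> T q' \<theta> f out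
  proof -
    obtain q1 q2 where q: "q = (q1, q2)"
      by fastforce
    obtain m1 u1 \<gamma> q1' where
      lookup1: "srt_lookup S1 q1 \<sigma> (order_type_row T 0 0 (nregs S1)) = Some (m1, u1, \<gamma>, q1')"
      using delta unfolding q crm_cascade_def by (auto split: option.splits)
    define v where "v = upd_sources m1 0 0 ! u1"
    obtain m2 u2 \<theta>' q2' where
      lookup2: "srt_lookup S2 q2 \<gamma> (order_type_row T v (nregs S1) (nregs S2)) = Some (m2, u2, \<theta>', q2')"
      using delta lookup1 unfolding q crm_cascade_def v_def by (auto simp: Let_def split: option.splits)
    have res: "q' = (q1', q2')" "f = upd_sources m1 0 0 @ upd_sources m2 v (nregs S1)"
        "out = upd_sources m2 v (nregs S1) ! u2"
      using delta lookup1 lookup2 unfolding q crm_cascade_def v_def by (auto simp: Let_def)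
    have tr: "(q1, \<sigma>, order_type_row T 0 0 (nregs S1), m1, u1, \<gamma>, q1') \<in> transitions S1"
        "(q2, \<gamma>, order_type_row T v (nregs S1) (nregs S2), m2, u2, \<theta>', q2') \<in> transitions S2"
      using lookup1 lookup2 by (simp_all add: srt_lookup_eq_Some_iff S1(2) S2(2))
    have "v \<le> nregs S1"
      using srt_transitionD[OF S1(1,3) tr(1)] by (auto simp: v_def upd_sources_def)
    with res show ?thesis
      using srt_transitionD[OF S1(1,3) tr(1)] srt_transitionD[OF S2(1,3) tr(2)]
      by (auto simp: upd_sources_def nth_append)
  qed
  then show ?thesis
    using S1(1) S2(1) by (auto simp: crm_wf_def srt_wf_def)
qed

lemma transd_compose_eq_crm_sem:
  "transd_compose (srt_sem S1) (srt_sem S2) = crm_sem (crm_cascade S1 S2)"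
proof -
  have len: "length (init_regs S1) = nregs S1" "length (init_regs S2) = nregs S2"
    using S1(1) S2(1) by (simp_all add: srt_wf_def)
  have "step_run (crm_step (crm_cascade S1 S2)) ((init_state S1, init_state S2), init_regs S1 @ init_regs S2) s t
      \<longleftrightarrow> step_run (step_cascade (srt_step S1) (srt_step S2))
        ((init_state S1, init_regs S1), (init_state S2, init_regs S2)) s t" for s t
  proof (rule step_run_crm_concat_config[OF _ _ len])
    show "crm_step (crm_cascade S1 S2) ((q1, q2), R1 @ R2) x y ((q1', q2'), R') \<longleftrightarrow>
        (\<exists>R1' R2'. R' = R1' @ R2'
           \<and> step_cascade (srt_step S1) (srt_step S2) ((q1, R1), (q2, R2)) x y ((q1', R1'), (q2', R2')))"
      if "length R1 = nregs S1" "length R2 = nregs S2" for q1 q2 R1 R2 x y q1' q2' R'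
      using crm_step_crm_cascade_iff[OF that] by (cases x, cases y) (auto simp: step_cascade_def)
  qed (auto simp: step_cascade_def dest: srt_step_length)
  then have "step_run (crm_step (crm_cascade S1 S2)) ((init_state S1, init_state S2), init_regs S1 @ init_regs S2)
      = (\<lambda>s t. \<exists>u. length u = length s \<and> step_run (srt_step S1) (init_state S1, init_regs S1) s u
          \<and> step_run (srt_step S2) (init_state S2, init_regs S2) u t)"
    by (intro ext) (simp add: step_run_cascade, metis step_run_length)
  then show ?thesis
    by (simp add: crm_sem_def srt_sem_eq_zip_set transd_compose_zip_set)
qed

end

lemma DSRTA_definable_Int:
  fixes T1 T2 :: "(('a::finite \<times> 'd::{linorder, group_add}) \<times> ('b::finite \<times> 'd)) list set"
  assumes "DSRTA_definable T1" "DSRTA_definable T2"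
  shows "DSRTA_definable (T1 \<inter> T2)"
proof -
  obtain S1 S2 :: "('a, 'b, 'd) srt" where
    S1: "srt_wf S1" "srt_deterministic S1" "srt_add_free S1" "T1 = srt_sem S1" and
    S2: "srt_wf S2" "srt_deterministic S2" "srt_add_free S2" "T2 = srt_sem S2"
    using assms unfolding DSRTA_definable_def by blast
  then show ?thesis
    using srt_sem_Int_eq_crm_sem[OF S1(1-3) S2(1-3)] crm_wf_crm_Int[OF S1(1-3) S2(1-3)]
      DSRTA_definable_crm_sem by metis
qed

lemma DSRTA_definable_transd_compose:
  fixes T1 :: "(('a::finite \<times> 'd::{linorder, group_add}) \<times> ('b::finite \<times> 'd)) list set"
    and T2 :: "(('b \<times> 'd) \<times> ('c::finite \<times> 'd)) list set"
  assumes "DSRTA_definable T1" "DSRTA_definable T2"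
  shows "DSRTA_definable (transd_compose T1 T2)"
proof -
  obtain S1 :: "('a, 'b, 'd) srt" and S2 :: "('b, 'c, 'd) srt" where
    S1: "srt_wf S1" "srt_deterministic S1" "srt_add_free S1" "T1 = srt_sem S1" and
    S2: "srt_wf S2" "srt_deterministic S2" "srt_add_free S2" "T2 = srt_sem S2"
    using assms unfolding DSRTA_definable_def by blast
  then show ?thesis
    using transd_compose_eq_crm_sem[OF S1(1-3) S2(1-3)] crm_wf_crm_cascade[OF S1(1-3) S2(1-3)]
      DSRTA_definable_crm_sem by metis
qed

theorem theorem3p22:
  assumes "infinite (UNIV :: 'd::{linorder, group_add} set)"
  shows "(\<forall>T1 T2 :: (('a::finite \<times> 'd) \<times> ('b::finite \<times> 'd)) list set.
            DSRTA_definable T1 \<and> DSRTA_definable T2 \<longrightarrow> DSRTA_definable (T1 \<inter> T2))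
       \<and> (\<forall>(T1 :: (('a \<times> 'd) \<times> ('b \<times> 'd)) list set)
             (T2 :: (('b \<times> 'd) \<times> ('c::finite \<times> 'd)) list set).
            DSRTA_definable T1 \<and> DSRTA_definable T2 \<longrightarrow>
            DSRTA_definable (transd_compose T1 T2))
       \<and> (\<exists>T1 T2 :: (('a \<times> 'd) \<times> ('b \<times> 'd)) list set.
            DSRTA_definable T1 \<and> DSRTA_definable T2 \<and> \<not> DSRTA_definable (T1 \<union> T2))"
  using DSRTA_definable_Int DSRTA_definable_transd_compose
    DSRTA_definable_not_closed_under_union[OF assms]
  by blast

end
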